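(* Let $\mathscr{A}=\{a,b\}$, let $S$ be the Fibonacci substitution $a\mapsto ab$, $b\mapsto a$, and let $\Xi$ be the associated Fibonacci subshift. For $k\in\mathbb{N}$ let $\eta^a_k=(S^k(a))^\infty$ and $\eta^b_k=(S^k(b))^\infty$ and let $\Xi^a_k=\mathrm{Orb}(\eta^a_k)$, $\Xi^b_k=\mathrm{Orb}(\eta^b_k)$. Then $\Xi$ is periodically approximable and both sequences $(\Xi^a_k)_k$ and $(\Xi^b_k)_k$ converge to $\Xi$ in the Hausdorff topology.
   Context: $S$ extends to finite words as a homomorphism for concatenation. The Fibonacci subshift is $\Xi=\{\xi\in\mathscr{A}^{\mathbb{Z}}:\text{every finite subword of }\xi\text{ is a subword of some }S^n(c),\ n\in\mathbb{N},\ c\in\mathscr{A}\}$. For a finite word $u$, $u^\infty$ is the two-sided periodic sequence repeating $u$. $\mathscr{A}^{\mathbb{Z}}$ has the product topology and shift $(T\xi)(j)=\xi(j-1)$, $\mathrm{Orb}(\eta)=\{T^n\eta:n\in\mathbb{Z}\}$. Subshifts (non-empty closed $T$-invariant subsets) carry the Hausdorff (Vietoris) topology (basis: $\{\Xi:\Xi\cap F=\emptyset,\Xi\cap O\neq\emptyset\ \forall O\in\mathcal{F}\}$, $F$ closed, $\mathcal{F}$ a finite family of open sets). Periodically approximable means being a limit of subshifts $\mathrm{Orb}(\eta)$ with $\eta$ periodic. *)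

theory Defs
  imports "HOL-Analysis.Analysis" "HOL-Library.Sublist"
begin

datatype letter = La | Lb

type_synonym config = "int \<Rightarrow> letter"

fun fib_sub :: "letter \<Rightarrow> letter list" where
  "fib_sub La = [La, Lb]"
| "fib_sub Lb = [La]"

definition fib_word :: "letter list \<Rightarrow> letter list" where
  "fib_word w = concat (map fib_sub w)"

abbreviation fib_iter :: "nat \<Rightarrow> letter list \<Rightarrow> letter list" where
  "fib_iter n w \<equiv> (fib_word ^^ n) w"

definition subword_at :: "config \<Rightarrow> int \<Rightarrow> nat \<Rightarrow> letter list" where
  "subword_at \<xi> m n = map (\<lambda>i. \<xi> (m + int i)) [0..<n]"

definition Fib_subshift :: "config set" where
  "Fib_subshift = {\<xi>. \<forall>m n. \<exists>k c. sublist (subword_at \<xi> m n) (fib_iter k [c])}"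

definition per_word :: "letter list \<Rightarrow> config" where
  "per_word u = (\<lambda>j. u ! nat (j mod int (length u)))"

definition shift :: "config \<Rightarrow> config" where
  "shift \<xi> = (\<lambda>j. \<xi> (j - 1))"

definition shift_pow :: "int \<Rightarrow> config \<Rightarrow> config" where
  "shift_pow n \<xi> = (\<lambda>j. \<xi> (j - n))"

definition Orb :: "config \<Rightarrow> config set" where
  "Orb \<eta> = range (\<lambda>n. shift_pow n \<eta>)"

definition periodic_config :: "config \<Rightarrow> bool" where
  "periodic_config \<eta> \<longleftrightarrow> (\<exists>p::int. p > 0 \<and> (\<forall>j. \<eta> (j + p) = \<eta> j))"

definition config_top :: "config topology" where
  "config_top = product_topology (\<lambda>_. discrete_topology UNIV) UNIV"

definition is_subshift :: "config set \<Rightarrow> bool" where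
  "is_subshift X \<longleftrightarrow> X \<noteq> {} \<and> closedin config_top X \<and> shift ` X = X"

text \<open>Hausdorff (Vietoris) topology on the set of subshifts, generated by the basis sets.\<close>
definition vietoris_basis :: "config set set set" where
  "vietoris_basis = {{X. is_subshift X \<and> X \<inter> F = {} \<and> (\<forall>U\<in>Us. X \<inter> U \<noteq> {})} | F Us.
      closedin config_top F \<and> finite Us \<and> (\<forall>U\<in>Us. openin config_top U)}"

definition vietoris_top :: "config set topology" where
  "vietoris_top = topology_generated_by vietoris_basis"

definition periodically_approximable :: "config set \<Rightarrow> bool" where
  "periodically_approximable X \<longleftrightarrow>
     (\<exists>\<eta> :: nat \<Rightarrow> config. (\<forall>n. periodic_config (\<eta> n)) \<and>
        limitin vietoris_top (\<lambda>n. Orb (\<eta> n)) X sequentially)"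

end

(*
  For u_k = S^k(a), every legal word occurs in u_k for large k,
  so some shift of the periodic point u_k^\<infinity> enters any given cylinder around a point of
  the subshift. Conversely every window of u_k^\<infinity> of length at most |u_k| is a factor
  of u_k u_k, which occurs in S^(k+3)(a) = S^k(ab) S^k(a) S^k(a) S^k(b); by compactness a closed
  set disjoint from the subshift only contains configurations with an illegal central window of
  one fixed radius, so it is eventually missed by the periodic orbits. Since
  S^(k+1)(b) = S^k(a), the b-sequence is a shift of the a-sequence.
*)

theory Submission
  imports Defs
begin

section \<open>Fibonacci words\<close>

lemma fib_sub_neq_Nil: "fib_sub c \<noteq> []"
  by (cases c) auto

lemma fib_word_append [simp]: "fib_word (xs @ ys) = fib_word xs @ fib_word ys"
  by (simp add: fib_word_def)

lemma fib_word_eq_Nil_iff [simp]: "fib_word w = [] \<longleftrightarrow> w = []"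
  by (cases w) (auto simp: fib_word_def fib_sub_neq_Nil)

lemma fib_iter_append: "fib_iter k (xs @ ys) = fib_iter k xs @ fib_iter k ys"
  by (induction k) auto

lemma fib_iter_eq_Nil_iff [simp]: "fib_iter k w = [] \<longleftrightarrow> w = []"
  by (induction k) auto

lemma fib_iter_Suc: "fib_iter (Suc k) w = fib_iter k (fib_word w)"
  by (simp only: funpow_Suc_right comp_def)

lemma fib_iter_Suc_La: "fib_iter (Suc k) [La] = fib_iter k [La] @ fib_iter k [Lb]"
proof -
  have "fib_word [La] = [La] @ [Lb]"
    by (simp add: fib_word_def)
  then show ?thesis
    by (simp only: fib_iter_Suc fib_iter_append)
qed

lemma fib_iter_Suc_Lb: "fib_iter (Suc k) [Lb] = fib_iter k [La]"
proof -
  have "fib_word [Lb] = [La]"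
    by (simp add: fib_word_def)
  then show ?thesis
    by (simp only: fib_iter_Suc)
qed

lemma length_fib_iter_La: "k < length (fib_iter k [La])"
proof (induction k)
  case (Suc k)
  have "0 < length (fib_iter k [Lb])"
    by simp
  with Suc show ?case
    unfolding fib_iter_Suc_La length_append by linarith
qed simp

lemma sublist_fib_iter_La_mono:
  assumes "k \<le> l" shows "sublist (fib_iter k [La]) (fib_iter l [La])"
  using assms
proof (induction rule: dec_induct)
  case (step l)
  have "sublist (fib_iter l [La]) (fib_iter (Suc l) [La])"
    unfolding fib_iter_Suc_La by simp
  with step show ?case
    by (meson sublist_order.order_trans)
qed simp

lemma sublist_double_fib_iter_La:
  "sublist (fib_iter k [La] @ fib_iter k [La]) (fib_iter (k + 3) [La])"
proof -
  have "fib_iter 3 [La] = [La, Lb] @ ([La] @ [La]) @ [Lb]"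
    by (simp add: numeral_3_eq_3 fib_word_def)
  then have "fib_iter (k + 3) [La]
      = fib_iter k [La, Lb] @ (fib_iter k [La] @ fib_iter k [La]) @ fib_iter k [Lb]"
    by (simp only: funpow_add comp_def fib_iter_append)
  then show ?thesis by (metis sublist_appendI)
qed

definition fib_legal :: "letter list \<Rightarrow> bool" where
  "fib_legal w \<longleftrightarrow> (\<exists>k c. sublist w (fib_iter k [c]))"

lemma fib_legal_sublist: "sublist v w \<Longrightarrow> fib_legal w \<Longrightarrow> fib_legal v"
  unfolding fib_legal_def by (meson sublist_order.order_trans)

lemma eventually_sublist_fib_iter_La:
  assumes "fib_legal w"
  shows "\<forall>\<^sub>F k in sequentially. sublist w (fib_iter k [La])"
proof -
  obtain m c where "sublist w (fib_iter m [c])"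
    using assms by (auto simp: fib_legal_def)
  moreover have "sublist (fib_iter m [c]) (fib_iter (Suc m) [La])"
    unfolding fib_iter_Suc_La by (cases c) auto
  ultimately have "sublist w (fib_iter k [La])" if "Suc m \<le> k" for k
    using sublist_fib_iter_La_mono[OF that] by (meson sublist_order.order_trans)
  then show ?thesis
    unfolding eventually_sequentially by blast
qed

lemma eventually_length_fib_iter_La: "\<forall>\<^sub>F k in sequentially. n \<le> length (fib_iter k [La])"
proof (rule eventually_sequentiallyI)
  fix k assume "n \<le> k"
  with length_fib_iter_La[of k] show "n \<le> length (fib_iter k [La])"
    by linarith
qed

lemma fib_legal_double_fib_iter_La: "fib_legal (fib_iter k [La] @ fib_iter k [La])"
  unfolding fib_legal_def using sublist_double_fib_iter_La by blast

lemma subword_at_add: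
  "subword_at \<xi> m (a + b) = subword_at \<xi> m a @ subword_at \<xi> (m + int a) b"
  by (rule nth_equalityI) (auto simp: subword_at_def nth_append algebra_simps)

lemma sublist_subword_at:
  assumes "m \<le> m'" "m' + int n' \<le> m + int n"
  shows "sublist (subword_at \<xi> m' n') (subword_at \<xi> m n)"
proof -
  define a b where "a = nat (m' - m)" and "b = n - a - n'"
  have "m' = m + int a" "n = a + (n' + b)"
    using assms by (auto simp: a_def b_def)
  then have "subword_at \<xi> m n
      = subword_at \<xi> m a @ subword_at \<xi> m' n' @ subword_at \<xi> (m' + int n') b"
    by (simp only: subword_at_add)
  then show ?thesis
    by (metis sublist_appendI)
qed

lemma subword_at_shift_pow: "subword_at (shift_pow k \<eta>) m n = subword_at \<eta> (m - k) n"
  by (simp add: subword_at_def shift_pow_def algebra_simps)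

definition central_window :: "nat \<Rightarrow> config \<Rightarrow> letter list" where
  "central_window N \<xi> = subword_at \<xi> (- int N) (2 * N + 1)"

lemma sublist_central_window:
  assumes "- int N \<le> m" "m + int n \<le> int N + 1"
  shows "sublist (subword_at \<xi> m n) (central_window N \<xi>)"
  unfolding central_window_def using assms by (intro sublist_subword_at) auto

lemma length_central_window [simp]: "length (central_window N \<xi>) = 2 * N + 1"
  by (simp add: central_window_def subword_at_def)

lemma central_window_mono:
  assumes "N \<le> M" shows "sublist (central_window N \<xi>) (central_window M \<xi>)"
  using assms unfolding central_window_def[of N] by (intro sublist_central_window) auto

lemma central_window_eq_iff:
  "central_window N \<zeta> = central_window N \<xi> \<longleftrightarrow> (\<forall>j. - int N \<le> j \<and> j \<le> int N \<longrightarrow> \<zeta> j = \<xi> j)"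
proof -
  have "(\<forall>i<2 * N + 1. \<zeta> (- int N + int i) = \<xi> (- int N + int i))
      \<longleftrightarrow> (\<forall>j. - int N \<le> j \<and> j \<le> int N \<longrightarrow> \<zeta> j = \<xi> j)"
  proof safe
    fix j assume agree: "\<forall>i<2 * N + 1. \<zeta> (- int N + int i) = \<xi> (- int N + int i)"
      and j: "- int N \<le> j" "j \<le> int N"
    then have "nat (j + int N) < 2 * N + 1" "- int N + int (nat (j + int N)) = j"
      by auto
    with agree show "\<zeta> j = \<xi> j"
      by metis
  qed auto
  then show ?thesis
    unfolding central_window_def subword_at_def map_eq_conv
    by (simp add: atLeast0LessThan Ball_def del: upt_Suc)
qed

lemma Fib_subshift_iff_central_windows:
  "\<xi> \<in> Fib_subshift \<longleftrightarrow> (\<forall>N. fib_legal (central_window N \<xi>))"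
proof
  assume "\<forall>N. fib_legal (central_window N \<xi>)"
  moreover have "sublist (subword_at \<xi> m n) (central_window (nat \<bar>m\<bar> + n) \<xi>)" for m n
    by (rule sublist_central_window) auto
  ultimately show "\<xi> \<in> Fib_subshift"
    unfolding Fib_subshift_def fib_legal_def[symmetric] by (auto intro: fib_legal_sublist)
qed (auto simp: Fib_subshift_def fib_legal_def central_window_def)

lemma subword_at_shift: "subword_at (shift \<xi>) m n = subword_at \<xi> (m - 1) n"
  by (simp add: subword_at_def shift_def algebra_simps)

lemma shift_Fib_subshift: "shift ` Fib_subshift = Fib_subshift"
proof -
  have shift_mem_iff: "shift \<xi> \<in> Fib_subshift \<longleftrightarrow> \<xi> \<in> Fib_subshift" for \<xi>
    by (simp add: Fib_subshift_def subword_at_shift) (metis add_diff_cancel_right')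
  have "\<xi> \<in> shift ` Fib_subshift" if "\<xi> \<in> Fib_subshift" for \<xi>
  proof (rule image_eqI)
    show "\<xi> = shift (shift_pow (-1) \<xi>)"
      by (simp add: shift_def shift_pow_def)
    with that show "shift_pow (-1) \<xi> \<in> Fib_subshift"
      using shift_mem_iff by metis
  qed
  with shift_mem_iff show ?thesis
    by blast
qed

section \<open>The product topology on configurations\<close>

lemma topspace_config_top [simp]: "topspace config_top = UNIV"
  by (simp add: config_top_def)

lemma finite_UNIV_letter: "finite (UNIV :: letter set)"
proof -
  have "(UNIV :: letter set) = {La, Lb}"
    by (auto intro: letter.exhaust)
  then show ?thesis
    by (metis finite.emptyI finite_insert)
qed

lemma compact_space_config_top: "compact_space config_top"
  unfolding config_top_def
  by (simp add: compact_space_product_topology compact_space_discrete_topology finite_UNIV_letter)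

lemma t1_space_config_top: "t1_space config_top"
  unfolding config_top_def
  by (intro Hausdorff_imp_t1_space) (simp add: Hausdorff_space_product_topology)

lemma compactin_subset_incseq_openin:
  assumes "compactin X K" "\<And>n. openin X (U n)" "incseq U" "K \<subseteq> (\<Union>n. U n)"
  obtains n where "K \<subseteq> U n"
proof -
  from assms(1) have "(\<forall>B\<in>range U. openin X B) \<and> K \<subseteq> \<Union>(range U)
      \<longrightarrow> (\<exists>\<F>. finite \<F> \<and> \<F> \<subseteq> range U \<and> K \<subseteq> \<Union>\<F>)"
    unfolding compactin_def by blast
  with assms(2,4) obtain \<F> where \<F>: "finite \<F>" "\<F> \<subseteq> range U" "K \<subseteq> \<Union>\<F>"
    by blast
  then obtain S where S: "finite S" "\<F> = U ` S"
    by (meson finite_subset_image)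
  have "U s \<subseteq> U (Max (insert 0 S))" if "s \<in> S" for s
    using that S(1) assms(3) by (simp add: incseqD)
  with \<F>(3) S(2) that show thesis
    by blast
qed

definition cylinder :: "nat \<Rightarrow> config \<Rightarrow> config set" where
  "cylinder N \<xi> = {\<zeta>. central_window N \<zeta> = central_window N \<xi>}"

lemma openin_cylinder: "openin config_top (cylinder N \<xi>)"
proof -
  define X where "X j = (if - int N \<le> j \<and> j \<le> int N then {\<xi> j} else UNIV)" for j
  have "cylinder N \<xi> = (\<Pi>\<^sub>E j\<in>UNIV. X j)"
    by (auto simp: cylinder_def central_window_eq_iff X_def PiE_UNIV_domain Pi_iff split: if_splits)
  moreover have "finite {j. X j \<noteq> topspace (discrete_topology UNIV)}"
    by (rule finite_subset[of _ "{- int N..int N}"]) (auto simp: X_def)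
  ultimately show ?thesis
    unfolding config_top_def by (simp add: product_topology_basis)
qed

lemma cylinder_subset_openin:
  assumes "openin config_top U" "\<xi> \<in> U"
  obtains N where "cylinder N \<xi> \<subseteq> U"
proof -
  obtain X where X: "\<xi> \<in> (\<Pi>\<^sub>E j\<in>UNIV. X j)" "finite {j. X j \<noteq> UNIV}" "(\<Pi>\<^sub>E j\<in>UNIV. X j) \<subseteq> U"
    using product_topology_open_contains_basis[OF assms[unfolded config_top_def]] by auto
  define N where "N = Max (insert 0 ((\<lambda>j. nat \<bar>j\<bar>) ` {j. X j \<noteq> UNIV}))"
  have "cylinder N \<xi> \<subseteq> (\<Pi>\<^sub>E j\<in>UNIV. X j)"
  proof
    fix \<zeta> assume "\<zeta> \<in> cylinder N \<xi>"
    then have agree: "\<zeta> j = \<xi> j" if "- int N \<le> j" "j \<le> int N" for j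
      using that by (simp add: cylinder_def central_window_eq_iff)
    have fixed: "\<zeta> j = \<xi> j" if "X j \<noteq> UNIV" for j
    proof -
      have "nat \<bar>j\<bar> \<le> N"
        unfolding N_def using that X(2) by (intro Max_ge) auto
      then show ?thesis
        by (intro agree) linarith+
    qed
    show "\<zeta> \<in> (\<Pi>\<^sub>E j\<in>UNIV. X j)"
      unfolding PiE_UNIV_domain
    proof
      fix j
      show "\<zeta> j \<in> X j"
        using X(1) fixed[of j] by (cases "X j = UNIV") (auto simp: PiE_UNIV_domain)
    qed
  qed
  then show thesis
    using X(3) by (intro that) (rule order_trans)
qed

definition illegal_window :: "nat \<Rightarrow> config set" where
  "illegal_window N = {\<zeta>. \<not> fib_legal (central_window N \<zeta>)}"

lemma openin_illegal_window: "openin config_top (illegal_window N)"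
proof -
  have "illegal_window N = (\<Union>\<zeta>\<in>illegal_window N. cylinder N \<zeta>)"
    by (auto simp: illegal_window_def cylinder_def)
  then show ?thesis
    by (metis openin_cylinder openin_Union imageE)
qed

lemma incseq_illegal_window: "incseq illegal_window"
  unfolding incseq_def illegal_window_def using central_window_mono fib_legal_sublist by blast

lemma Compl_Fib_subshift: "- Fib_subshift = (\<Union>N. illegal_window N)"
  by (auto simp: illegal_window_def Fib_subshift_iff_central_windows)

lemma closedin_Fib_subshift: "closedin config_top Fib_subshift"
proof -
  have "openin config_top (\<Union>N. illegal_window N)"
    by (rule openin_Union) (auto intro: openin_illegal_window)
  then show ?thesis
    unfolding closedin_def by (simp add: Compl_eq_Diff_UNIV[symmetric] Compl_Fib_subshift)
qed

lemma closedin_disjoint_Fib_subshift: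
  assumes "closedin config_top F" "Fib_subshift \<inter> F = {}"
  obtains N where "F \<subseteq> illegal_window N"
proof (rule compactin_subset_incseq_openin)
  show "compactin config_top F"
    using closedin_compact_space[OF compact_space_config_top assms(1)] .
  show "F \<subseteq> (\<Union>N. illegal_window N)"
    using assms(2) Compl_Fib_subshift by auto
qed (use that openin_illegal_window incseq_illegal_window in auto)

lemma subword_at_per_word_mod:
  "subword_at (per_word u) m n = subword_at (per_word u) (m mod int (length u)) n"
  by (simp add: subword_at_def per_word_def mod_add_left_eq)

lemma subword_at_per_word:
  assumes "0 \<le> m" "m + int n \<le> int (length u)"
  shows "subword_at (per_word u) m n = take n (drop (nat m) u)"
  using assms by (intro nth_equalityI) (auto simp: subword_at_def per_word_def nat_add_distrib)

lemma sublist_subword_at_per_word: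
  assumes "u \<noteq> []" "n \<le> length u"
  shows "sublist (subword_at (per_word u) m n) (u @ u)"
proof -
  define L where "L = length u"
  have "subword_at (per_word u) (int L) L = subword_at (per_word u) 0 L"
    using subword_at_per_word_mod[of u "int L" L] by (simp add: L_def)
  then have "subword_at (per_word u) 0 (L + L)
      = subword_at (per_word u) 0 L @ subword_at (per_word u) 0 L"
    by (simp add: subword_at_add)
  also have "\<dots> = u @ u"
    by (simp add: subword_at_per_word L_def)
  finally have period: "subword_at (per_word u) 0 (L + L) = u @ u" .
  have "0 \<le> m mod int L" "m mod int L < int L"
    using assms by (simp_all add: L_def)
  with assms(2) have
    "sublist (subword_at (per_word u) (m mod int L) n) (subword_at (per_word u) 0 (L + L))"
    by (intro sublist_subword_at) (auto simp: L_def)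
  then have "sublist (subword_at (per_word u) (m mod int L) n) (u @ u)"
    unfolding period .
  then show ?thesis
    using subword_at_per_word_mod[of u m n] by (simp add: L_def)
qed

lemma shift_pow_per_word_mod:
  "shift_pow n (per_word u) = shift_pow (n mod int (length u)) (per_word u)"
  by (auto simp: shift_pow_def per_word_def mod_diff_right_eq)

lemma finite_Orb_per_word:
  assumes "u \<noteq> []" shows "finite (Orb (per_word u))"
proof (rule finite_subset)
  show "Orb (per_word u) \<subseteq> (\<lambda>n. shift_pow n (per_word u)) ` {0..<int (length u)}"
    using assms by (auto simp: Orb_def image_iff intro: shift_pow_per_word_mod)
qed simp

lemma shift_Orb: "shift ` Orb \<eta> = Orb \<eta>"
proof -
  have shift_shift_pow: "shift (shift_pow n \<eta>) = shift_pow (n + 1) \<eta>" for n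
    by (simp add: shift_def shift_pow_def algebra_simps)
  show ?thesis
  proof
    show "shift ` Orb \<eta> \<subseteq> Orb \<eta>"
      by (auto simp: Orb_def shift_shift_pow)
    show "Orb \<eta> \<subseteq> shift ` Orb \<eta>"
    proof
      fix \<zeta> assume "\<zeta> \<in> Orb \<eta>"
      then obtain n where "\<zeta> = shift_pow n \<eta>"
        by (auto simp: Orb_def)
      then have "\<zeta> = shift (shift_pow (n - 1) \<eta>)"
        by (simp add: shift_shift_pow)
      then show "\<zeta> \<in> shift ` Orb \<eta>"
        by (auto simp: Orb_def)
    qed
  qed
qed

lemma is_subshift_Orb_per_word:
  assumes "u \<noteq> []" shows "is_subshift (Orb (per_word u))"
  unfolding is_subshift_def
proof (intro conjI)
  show "Orb (per_word u) \<noteq> {}"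
    by (simp add: Orb_def)
  show "closedin config_top (Orb (per_word u))"
    using t1_space_config_top finite_Orb_per_word[OF assms] by (simp add: t1_space_closedin_finite)
qed (rule shift_Orb)

lemma periodic_config_per_word:
  assumes "u \<noteq> []" shows "periodic_config (per_word u)"
  unfolding periodic_config_def
  using assms by (intro exI[of _ "int (length u)"]) (simp add: per_word_def)

section \<open>Convergence in the Hausdorff topology\<close>

lemma eventually_in_vietoris_basis:
  assumes "B \<in> vietoris_basis" "X \<in> B"
    and subshifts: "\<forall>\<^sub>F k in sequentially. is_subshift (f k)"
    and hit: "\<And>U. openin config_top U \<Longrightarrow> X \<inter> U \<noteq> {} \<Longrightarrow> \<forall>\<^sub>F k in sequentially. f k \<inter> U \<noteq> {}"
    and miss: "\<And>F. closedin config_top F \<Longrightarrow> X \<inter> F = {} \<Longrightarrow> \<forall>\<^sub>F k in sequentially. f k \<inter> F = {}"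
  shows "\<forall>\<^sub>F k in sequentially. f k \<in> B"
proof -
  obtain F Us where B: "B = {Y. is_subshift Y \<and> Y \<inter> F = {} \<and> (\<forall>U\<in>Us. Y \<inter> U \<noteq> {})}"
    and F: "closedin config_top F" and Us: "finite Us" "\<forall>U\<in>Us. openin config_top U"
    using assms(1) unfolding vietoris_basis_def by blast
  have "\<forall>\<^sub>F k in sequentially. \<forall>U\<in>Us. f k \<inter> U \<noteq> {}"
    using Us assms(2) B by (auto intro!: eventually_ball_finite hit)
  moreover have "\<forall>\<^sub>F k in sequentially. f k \<inter> F = {}"
    using F assms(2) B by (intro miss) auto
  ultimately show ?thesis
    using subshifts unfolding B by eventually_elim auto
qed

lemma limitin_vietoris_top:
  assumes "is_subshift X"
    and subshifts: "\<forall>\<^sub>F k in sequentially. is_subshift (f k)"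
    and hit: "\<And>U. openin config_top U \<Longrightarrow> X \<inter> U \<noteq> {} \<Longrightarrow> \<forall>\<^sub>F k in sequentially. f k \<inter> U \<noteq> {}"
    and miss: "\<And>F. closedin config_top F \<Longrightarrow> X \<inter> F = {} \<Longrightarrow> \<forall>\<^sub>F k in sequentially. f k \<inter> F = {}"
  shows "limitin vietoris_top f X sequentially"
  unfolding limitin_def
proof (intro conjI allI impI)
  have "{Y. is_subshift Y \<and> Y \<inter> {} = {} \<and> (\<forall>U\<in>{}. Y \<inter> U \<noteq> {})} \<in> vietoris_basis"
    unfolding vietoris_basis_def by blast
  with assms(1) show "X \<in> topspace vietoris_top"
    unfolding vietoris_top_def by auto
next
  fix V assume "openin vietoris_top V \<and> X \<in> V"
  then have "generate_topology_on vietoris_basis V" "X \<in> V"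
    unfolding vietoris_top_def openin_topology_generated_by_iff by auto
  then show "\<forall>\<^sub>F k in sequentially. f k \<in> V"
  proof (induction rule: generate_topology_on.induct)
    case (Int a b)
    then show ?case
      by (simp add: eventually_conj)
  next
    case (UN K)
    then obtain V where V: "V \<in> K" "X \<in> V"
      by blast
    with UN.IH have "\<forall>\<^sub>F k in sequentially. f k \<in> V"
      by blast
    then show ?case
      by (rule eventually_mono) (use V in blast)
  next
    case (Basis B)
    then show ?case
      using eventually_in_vietoris_basis subshifts hit miss by blast
  qed simp
qed

lemma eventually_Orb_per_word_disjoint:
  assumes "closedin config_top F" "Fib_subshift \<inter> F = {}"
    and long: "\<And>n. \<forall>\<^sub>F k in sequentially. n \<le> length (u k)"
    and legal: "\<forall>\<^sub>F k in sequentially. fib_legal (u k @ u k)"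
  shows "\<forall>\<^sub>F k in sequentially. Orb (per_word (u k)) \<inter> F = {}"
proof -
  obtain N where N: "F \<subseteq> illegal_window N"
    using closedin_disjoint_Fib_subshift[OF assms(1,2)] .
  have legal_orbit: "Orb (per_word v) \<inter> illegal_window N = {}"
    if v: "2 * N + 1 \<le> length v" "fib_legal (v @ v)" for v
  proof -
    have "fib_legal (central_window N \<zeta>)" if \<zeta>: "\<zeta> \<in> Orb (per_word v)" for \<zeta>
    proof -
      obtain n where "\<zeta> = shift_pow n (per_word v)"
        using \<zeta> by (auto simp: Orb_def)
      then have "central_window N \<zeta> = subword_at (per_word v) (- int N - n) (2 * N + 1)"
        by (simp add: central_window_def subword_at_shift_pow)
      moreover have "sublist (subword_at (per_word v) (- int N - n) (2 * N + 1)) (v @ v)"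
        using v(1) by (intro sublist_subword_at_per_word) auto
      ultimately show ?thesis
        using v(2) by (metis fib_legal_sublist)
    qed
    then show ?thesis
      by (auto simp: illegal_window_def)
  qed
  have "\<forall>\<^sub>F k in sequentially. Orb (per_word (u k)) \<inter> illegal_window N = {}"
    using long[of "2 * N + 1"] legal by eventually_elim (rule legal_orbit)
  then show ?thesis
    by (rule eventually_mono) (use N in blast)
qed

lemma eventually_Orb_per_word_meets:
  assumes "openin config_top U" "Fib_subshift \<inter> U \<noteq> {}"
    and factors: "\<And>w. fib_legal w \<Longrightarrow> \<forall>\<^sub>F k in sequentially. sublist w (u k)"
  shows "\<forall>\<^sub>F k in sequentially. Orb (per_word (u k)) \<inter> U \<noteq> {}"
proof -
  obtain \<xi> where \<xi>: "\<xi> \<in> Fib_subshift" "\<xi> \<in> U"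
    using assms(2) by blast
  obtain N where N: "cylinder N \<xi> \<subseteq> U"
    using cylinder_subset_openin[OF assms(1) \<xi>(2)] .
  let ?w = "central_window N \<xi>"
  have meets: "Orb (per_word v) \<inter> cylinder N \<xi> \<noteq> {}" if w: "sublist ?w v" for v
  proof -
    obtain p s where v: "v = p @ ?w @ s"
      using w by (auto simp: sublist_def)
    define \<zeta> where "\<zeta> = shift_pow (- int N - int (length p)) (per_word v)"
    have "central_window N \<zeta> = subword_at (per_word v) (int (length p)) (2 * N + 1)"
      by (simp add: \<zeta>_def central_window_def subword_at_shift_pow)
    also have "\<dots> = ?w"
      by (subst subword_at_per_word) (simp_all add: v)
    finally have "\<zeta> \<in> cylinder N \<xi>"
      by (simp add: cylinder_def)
    moreover have "\<zeta> \<in> Orb (per_word v)"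
      by (simp add: \<zeta>_def Orb_def)
    ultimately show ?thesis
      by blast
  qed
  have "fib_legal ?w"
    using \<xi>(1) Fib_subshift_iff_central_windows by blast
  then have "\<forall>\<^sub>F k in sequentially. Orb (per_word (u k)) \<inter> cylinder N \<xi> \<noteq> {}"
    by (rule factors[THEN eventually_mono]) (rule meets)
  then show ?thesis
    by (rule eventually_mono) (use N in blast)
qed

lemma Fib_subshift_nonempty: "Fib_subshift \<noteq> {}"
proof
  assume "Fib_subshift = {}"
  then have "\<forall>\<^sub>F k in sequentially. Orb (per_word (fib_iter k [La])) \<inter> UNIV = {}"
    by (intro eventually_Orb_per_word_disjoint)
      (simp_all add: eventually_length_fib_iter_La fib_legal_double_fib_iter_La
        closedin_topspace[of config_top, unfolded topspace_config_top])
  then show False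
    by (simp add: Orb_def)
qed

lemma is_subshift_Fib_subshift: "is_subshift Fib_subshift"
  unfolding is_subshift_def
  using Fib_subshift_nonempty closedin_Fib_subshift shift_Fib_subshift by blast

lemma limitin_Orb_per_word_Fib_subshift:
  assumes long: "\<And>n. \<forall>\<^sub>F k in sequentially. n \<le> length (u k)"
    and legal: "\<forall>\<^sub>F k in sequentially. fib_legal (u k @ u k)"
    and factors: "\<And>w. fib_legal w \<Longrightarrow> \<forall>\<^sub>F k in sequentially. sublist w (u k)"
  shows "limitin vietoris_top (\<lambda>k. Orb (per_word (u k))) Fib_subshift sequentially"
proof (rule limitin_vietoris_top[OF is_subshift_Fib_subshift])
  show "\<forall>\<^sub>F k in sequentially. is_subshift (Orb (per_word (u k)))"
    using long[of 1] by eventually_elim (auto intro: is_subshift_Orb_per_word)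
qed (use eventually_Orb_per_word_meets[OF _ _ factors]
       eventually_Orb_per_word_disjoint[OF _ _ long legal] in auto)

theorem proposition14:
  shows "periodically_approximable Fib_subshift
    \<and> limitin vietoris_top (\<lambda>k. Orb (per_word (fib_iter k [La]))) Fib_subshift sequentially
    \<and> limitin vietoris_top (\<lambda>k. Orb (per_word (fib_iter k [Lb]))) Fib_subshift sequentially"
proof -
  have La: "limitin vietoris_top (\<lambda>k. Orb (per_word (fib_iter k [La]))) Fib_subshift sequentially"
    by (rule limitin_Orb_per_word_Fib_subshift)
      (simp_all add: eventually_length_fib_iter_La fib_legal_double_fib_iter_La
        eventually_sublist_fib_iter_La)
  have Lb: "limitin vietoris_top (\<lambda>k. Orb (per_word (fib_iter k [Lb]))) Fib_subshift sequentially"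
    by (rule limitin_sequentially_offset_rev[where k = 1])
      (simp only: Suc_eq_plus1[symmetric] fib_iter_Suc_Lb La)
  have "periodically_approximable Fib_subshift"
    unfolding periodically_approximable_def
    using La periodic_config_per_word by (intro exI[of _ "\<lambda>k. per_word (fib_iter k [La])"]) simp
  with La Lb show ?thesis
    by blast
qed

end
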